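(* For $k\ge0$, let $S_k$ be the star signed graph with $k+1$ vertices and $k$ positive edges (all joining one center vertex to the $k$ other vertices). Then $X_{S_k}=\sum_{i=0}^k(-1)^i\binom{k}{i}p_{1,0}^{k-i}\,p_{i+1,0}$.
   Context: For a signed graph $\Sigma$ (finite graph with edge signs $\mathrm{sgn}(e)\in\{+,-\}$), a coloring $\kappa:V(\Sigma)\to\mathbb{Z}$ is proper if $\kappa(u)\ne\mathrm{sgn}(e)\kappa(v)$ for every edge $e$ with endpoints $u,v$, and $X_\Sigma=\sum_{\kappa\text{ proper}}\prod_{v}x_{\kappa(v)}$ in commuting variables $x_i$, $i\in\mathbb{Z}$. $p_{a,b}=\sum_{i\in\mathbb{Z}}x_i^ax_{-i}^b$. *)

theory Defs
  imports Main "HOL-Library.Multiset" "HOL-Library.FuncSet"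
begin

text \<open>Formal power series in commuting variables x_i (i an integer), represented by
  their coefficient function: a monomial is a finite multiset of integers (the
  multiset of indices, with multiplicity = exponent).\<close>
type_synonym sfun = "int multiset \<Rightarrow> int"

definition sf_one :: sfun where
  "sf_one = (\<lambda>m. if m = {#} then 1 else 0)"

definition sf_mult :: "sfun \<Rightarrow> sfun \<Rightarrow> sfun" where
  "sf_mult f g = (\<lambda>m. \<Sum>m1\<in>{m1. m1 \<subseteq># m}. f m1 * g (m - m1))"

definition sf_pow :: "sfun \<Rightarrow> nat \<Rightarrow> sfun" where
  "sf_pow f n = ((sf_mult f) ^^ n) sf_one"

text \<open>p_{a,b} = sum over integers i of x_i^a x_{-i}^b.\<close>
definition p_ab :: "nat \<Rightarrow> nat \<Rightarrow> sfun" where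
  "p_ab a b = (\<lambda>m. int (card {i::int. m = replicate_mset a i + replicate_mset b (- i)}))"

text \<open>A signed graph: finite vertex set V and a set of edges (u, v, s), where s = True
  means the edge is positive and s = False means negative.\<close>
definition proper_coloring :: "'v set \<Rightarrow> ('v \<times> 'v \<times> bool) set \<Rightarrow> ('v \<Rightarrow> int) \<Rightarrow> bool" where
  "proper_coloring V E \<kappa> \<longleftrightarrow>
     (\<forall>(u, v, s) \<in> E. \<kappa> u \<noteq> (if s then \<kappa> v else - \<kappa> v))"

definition chrom_sym :: "'v set \<Rightarrow> ('v \<times> 'v \<times> bool) set \<Rightarrow> sfun" where
  "chrom_sym V E = (\<lambda>m. int (card {\<kappa> \<in> V \<rightarrow>\<^sub>E (UNIV :: int set).
        proper_coloring V E \<kappa> \<and> image_mset \<kappa> (mset_set V) = m}))"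

definition star_V :: "nat \<Rightarrow> nat set" where
  "star_V k = {0..k}"

definition star_E :: "nat \<Rightarrow> (nat \<times> nat \<times> bool) set" where
  "star_E k = {(0, j, True) | j. j \<in> {1..k}}"

end

theory Submission
  imports Defs
begin

text \<open>Let Y(k, i) be the chromatic function of S_k in which the centre's variable is raised
  to the power i + 1, so that Y(0, i) = p_{i+1,0} and Y(k, 0) = X_{S_k}. Multiplying by p_{1,0}
  adjoins a vertex of arbitrary colour. Viewed as a new leaf of S_k, its colour either differs
  from the centre's, giving a proper colouring of S_{k+1}, or equals it, which only raises the
  centre's exponent. Hence Y(k + 1, i) = p_{1,0} Y(k, i) - Y(k, i + 1), i.e. Y(k) = (L - S)^k Y(0)
  for the commuting operators L = multiplication by p_{1,0} and S = shift of i, and the binomial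
  theorem gives the formula.\<close>

lemma finite_submultisets: "finite {a. a \<subseteq># m}"
proof (rule finite_subset)
  show "{a. a \<subseteq># m} \<subseteq> (\<Union>n\<le>size m. multisets_of_size (set_mset m) n)"
    by (auto simp: multisets_of_size_def dest: set_mset_mono size_mset_mono)
qed auto

lemma sf_mult_one_left: "sf_mult sf_one h = h"
proof
  fix m :: "int multiset"
  have "sf_mult sf_one h m = (\<Sum>a\<in>{a. a \<subseteq># m}. if a = {#} then h m else 0)"
    unfolding sf_mult_def sf_one_def by (rule sum.cong) auto
  then show "sf_mult sf_one h m = h m" by (simp add: finite_submultisets)
qed

lemma sf_mult_assoc: "sf_mult (sf_mult f g) h = sf_mult f (sf_mult g h)"
proof
  fix m :: "int multiset"
  have "sf_mult (sf_mult f g) h m =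
      (\<Sum>(a, b)\<in>(SIGMA a:{a. a \<subseteq># m}. {b. b \<subseteq># a}). f b * g (a - b) * h (m - a))"
    by (simp add: sf_mult_def sum_distrib_right sum.Sigma finite_submultisets)
  also have "\<dots> = (\<Sum>(b, c)\<in>(SIGMA b:{b. b \<subseteq># m}. {c. c \<subseteq># m - b}). f b * g c * h (m - b - c))"
    by (rule sum.reindex_bij_witness[where i = "\<lambda>(b, c). (b + c, b)" and j = "\<lambda>(a, b). (b, a - b)"])
      (auto simp: subset_mset.le_diff_conv2 add.commute intro: subset_mset.trans)
  also have "\<dots> = sf_mult f (sf_mult g h) m"
    by (simp add: sf_mult_def sum_distrib_left sum.Sigma finite_submultisets mult.assoc)
  finally show "sf_mult (sf_mult f g) h m = sf_mult f (sf_mult g h) m" .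
qed

lemma sf_mult_sum_right:
  "finite J \<Longrightarrow> sf_mult f (\<lambda>m. \<Sum>j\<in>J. c j * g j m) = (\<lambda>m. \<Sum>j\<in>J. c j * sf_mult f (g j) m)"
  by (simp add: sf_mult_def sum_distrib_left sum.swap[of _ J] mult.left_commute)

lemma sf_mult_sf_pow: "sf_mult (sf_pow f n) h = (sf_mult f ^^ n) h"
  by (induction n) (simp_all add: sf_pow_def sf_mult_one_left sf_mult_assoc)

lemma p_1_0_eq: "p_ab 1 0 a = (if \<exists>d. a = {#d#} then 1 else 0)"
proof -
  have "{d. a = replicate_mset 1 d + replicate_mset 0 (- d)} = {d. a = {#d#}}" by simp
  moreover have "{d. a = {#d#}} = (if \<exists>d. a = {#d#} then {THE d. a = {#d#}} else {})" by auto
  ultimately show ?thesis by (simp add: p_ab_def)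
qed

lemma sf_mult_p_1_0: "sf_mult (p_ab 1 0) g m = (\<Sum>d\<in>set_mset m. g (m - {#d#}))"
proof -
  have "(\<Sum>d\<in>set_mset m. g (m - {#d#})) = (\<Sum>a\<in>(\<lambda>d. {#d#}) ` set_mset m. g (m - a))"
    by (subst sum.reindex) (auto simp: inj_on_def)
  also have "\<dots> = (\<Sum>a\<in>{a. a \<subseteq># m}. p_ab 1 0 a * g (m - a))"
    by (rule sum.mono_neutral_cong_left) 
      (auto simp: finite_submultisets p_1_0_eq p_1_0_eq[unfolded One_nat_def])
  finally show ?thesis by (simp add: sf_mult_def)
qed

lemma sum_choose_Suc_shift:
  fixes a :: "nat \<Rightarrow> 'a::comm_ring_1"
  shows "(\<Sum>j\<le>Suc k. of_nat (Suc k choose j) * a j) =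
    (\<Sum>j\<le>k. of_nat (k choose j) * a j) + (\<Sum>j\<le>k. of_nat (k choose j) * a (Suc j))"
proof -
  have "(\<Sum>j\<le>k. of_nat (k choose j) * a j) = (\<Sum>j\<le>Suc k. of_nat (k choose j) * a j)"
    by (simp add: binomial_eq_0)
  also have "\<dots> = a 0 + (\<Sum>j\<le>k. of_nat (k choose Suc j) * a (Suc j))"
    by (subst sum.atMost_Suc_shift) simp
  finally have "(\<Sum>j\<le>k. of_nat (k choose j) * a j) = a 0 + (\<Sum>j\<le>k. of_nat (k choose Suc j) * a (Suc j))" .
  moreover have "(\<Sum>j\<le>Suc k. of_nat (Suc k choose j) * a j) =
      a 0 + (\<Sum>j\<le>k. of_nat (Suc k choose Suc j) * a (Suc j))"
    by (subst sum.atMost_Suc_shift) simp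
  ultimately show ?thesis
    by (simp add: sum.distrib algebra_simps)
qed

lemma binomial_solution_of_recurrence:
  fixes L :: "('a \<Rightarrow> 'b::comm_ring_1) \<Rightarrow> 'a \<Rightarrow> 'b"
  assumes L_sum: "\<And>(J :: nat set) c g. finite J \<Longrightarrow>
      L (\<lambda>m. \<Sum>j\<in>J. c j * g j m) = (\<lambda>m. \<Sum>j\<in>J. c j * L (g j) m)"
    and y_0: "\<And>i. y 0 i = b i"
    and y_Suc: "\<And>k i. y (Suc k) i = (\<lambda>m. L (y k i) m - y k (Suc i) m)"
  shows "y k i = (\<lambda>m. \<Sum>j\<le>k. (-1) ^ j * of_nat (k choose j) * (L ^^ (k - j)) (b (i + j)) m)"
proof (induction k arbitrary: i)
  case 0
  then show ?case by (simp add: y_0)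
next
  case (Suc k)
  define a where "a j m = (-1) ^ j * (L ^^ (Suc k - j)) (b (i + j)) m" for j m
  have "L (y k i) = (\<lambda>m. \<Sum>j\<le>k. of_nat (k choose j) * a j m)"
    unfolding Suc.IH L_sum[OF finite_atMost] by (simp add: a_def Suc_diff_le mult_ac)
  moreover have "y k (Suc i) = (\<lambda>m. - (\<Sum>j\<le>k. of_nat (k choose j) * a (Suc j) m))"
    by (simp add: Suc.IH a_def sum_negf[symmetric] mult_ac)
  ultimately have "y (Suc k) i = (\<lambda>m. \<Sum>j\<le>Suc k. of_nat (Suc k choose j) * a j m)"
    by (simp add: y_Suc sum_choose_Suc_shift del: sum.atMost_Suc)
  then show ?case by (simp add: a_def mult_ac)
qed

text \<open>The centre's colour is counted i extra times, so star_chrom k i is Y(k, i).\<close>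

definition star_colorings :: "nat \<Rightarrow> nat \<Rightarrow> int multiset \<Rightarrow> (nat \<Rightarrow> int) set" where
  "star_colorings k i m = {\<kappa> \<in> {0..k} \<rightarrow>\<^sub>E UNIV. (\<forall>j\<in>{1..k}. \<kappa> j \<noteq> \<kappa> 0) \<and>
     image_mset \<kappa> (mset_set {0..k}) + replicate_mset i (\<kappa> 0) = m}"

definition star_chrom :: "nat \<Rightarrow> nat \<Rightarrow> sfun" where
  "star_chrom k i = (\<lambda>m. int (card (star_colorings k i m)))"

lemma chrom_sym_star: "chrom_sym (star_V k) (star_E k) = star_chrom k 0"
proof -
  have "proper_coloring {0..k} (star_E k) \<kappa> \<longleftrightarrow> (\<forall>j\<in>{1..k}. \<kappa> j \<noteq> \<kappa> 0)" for \<kappa> :: "nat \<Rightarrow> int"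
    by (auto simp: proper_coloring_def star_E_def)
  then show ?thesis
    by (simp add: chrom_sym_def star_chrom_def star_colorings_def star_V_def)
qed

lemma finite_star_colorings: "finite (star_colorings k i m)"
proof (rule finite_subset)
  show "star_colorings k i m \<subseteq> {0..k} \<rightarrow>\<^sub>E set_mset m"
    by (force simp: star_colorings_def)
qed (simp add: finite_PiE)

lemma star_chrom_0: "star_chrom 0 i = p_ab (i + 1) 0"
proof
  fix m
  have "bij_betw (\<lambda>\<kappa>. \<kappa> 0) (star_colorings 0 i m) {c. m = replicate_mset (Suc i) c}"
    by (rule bij_betw_byWitness[where f' = "\<lambda>c. (\<lambda>x. if x = 0 then c else undefined)"])
      (auto simp: star_colorings_def fun_eq_iff PiE_def extensional_def)
  then show "star_chrom 0 i m = p_ab (i + 1) 0 m"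
    by (simp add: star_chrom_def p_ab_def bij_betw_same_card)
qed

lemma image_mset_mset_set_atLeast0AtMost_Suc:
  "image_mset \<kappa> (mset_set {0..Suc k}) = add_mset (\<kappa> (Suc k)) (image_mset \<kappa> (mset_set {0..k}))"
  by (simp add: atLeast0_atMost_Suc)

lemma star_colorings_SucD:
  assumes "\<kappa> \<in> star_colorings (Suc k) i m"
  shows "\<kappa> (Suc k) \<in># m" and "\<kappa> (Suc k) \<noteq> \<kappa> 0"
    and "restrict \<kappa> {0..k} \<in> star_colorings k i (m - {#\<kappa> (Suc k)#})"
proof -
  have m: "m = add_mset (\<kappa> (Suc k)) (image_mset \<kappa> (mset_set {0..k}) + replicate_mset i (\<kappa> 0))"
    using assms by (simp add: star_colorings_def image_mset_mset_set_atLeast0AtMost_Suc)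
  have "image_mset (restrict \<kappa> {0..k}) (mset_set {0..k}) = image_mset \<kappa> (mset_set {0..k})"
    by (rule image_mset_cong) simp
  then show "restrict \<kappa> {0..k} \<in> star_colorings k i (m - {#\<kappa> (Suc k)#})"
    using assms by (auto simp: star_colorings_def m)
  show "\<kappa> (Suc k) \<in># m" by (simp add: m)
  show "\<kappa> (Suc k) \<noteq> \<kappa> 0" using assms by (simp add: star_colorings_def)
qed

lemma fun_upd_in_star_colorings_Suc:
  assumes "\<kappa> \<in> star_colorings k i (m - {#d#})" and "d \<in># m" and "d \<noteq> \<kappa> 0"
  shows "\<kappa>(Suc k := d) \<in> star_colorings (Suc k) i m"
proof -
  have "image_mset (\<kappa>(Suc k := d)) (mset_set {0..k}) = image_mset \<kappa> (mset_set {0..k})"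
    by (rule image_mset_cong) simp
  then show ?thesis
    using assms by (auto simp: star_colorings_def image_mset_mset_set_atLeast0AtMost_Suc
        PiE_def extensional_def le_Suc_eq)
qed

lemma bij_betw_star_colorings_Suc:
  "bij_betw (\<lambda>\<kappa>. (\<kappa> (Suc k), restrict \<kappa> {0..k})) (star_colorings (Suc k) i m)
     {(d, \<kappa>) \<in> (SIGMA d:set_mset m. star_colorings k i (m - {#d#})). d \<noteq> \<kappa> 0}"
  by (rule bij_betw_byWitness[where f' = "\<lambda>(d, \<kappa>). \<kappa>(Suc k := d)"])
    (auto simp: star_colorings_SucD fun_upd_in_star_colorings_Suc,
     auto simp: star_colorings_def fun_eq_iff PiE_def extensional_def)

lemma bij_betw_star_colorings_center:
  "bij_betw (\<lambda>\<kappa>. (\<kappa> 0, \<kappa>)) (star_colorings k (Suc i) m)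
     {(d, \<kappa>) \<in> (SIGMA d:set_mset m. star_colorings k i (m - {#d#})). d = \<kappa> 0}"
  by (rule bij_betw_byWitness[where f' = snd]) (auto simp: star_colorings_def)

lemma card_star_colorings_Suc:
  "card (star_colorings (Suc k) i m) + card (star_colorings k (Suc i) m) =
     (\<Sum>d\<in>set_mset m. card (star_colorings k i (m - {#d#})))"
proof -
  let ?S = "SIGMA d:set_mset m. star_colorings k i (m - {#d#})"
  have "finite ?S" by (simp add: finite_star_colorings)
  have "card ?S = card ({(d, \<kappa>) \<in> ?S. d \<noteq> \<kappa> 0} \<union> {(d, \<kappa>) \<in> ?S. d = \<kappa> 0})"
    by (rule arg_cong[where f = card]) blast
  also have "\<dots> = card {(d, \<kappa>) \<in> ?S. d \<noteq> \<kappa> 0} + card {(d, \<kappa>) \<in> ?S. d = \<kappa> 0}"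
    by (rule card_Un_disjoint) (auto intro: finite_subset[OF _ \<open>finite ?S\<close>])
  also have "\<dots> = card (star_colorings (Suc k) i m) + card (star_colorings k (Suc i) m)"
    using bij_betw_same_card[OF bij_betw_star_colorings_Suc]
      bij_betw_same_card[OF bij_betw_star_colorings_center] by simp
  finally show ?thesis
    by (simp add: card_SigmaI finite_star_colorings)
qed

lemma star_chrom_Suc:
  "star_chrom (Suc k) i = (\<lambda>m. sf_mult (p_ab 1 0) (star_chrom k i) m - star_chrom k (Suc i) m)"
proof
  fix m
  have "int (card (star_colorings (Suc k) i m)) + int (card (star_colorings k (Suc i) m)) =
      (\<Sum>d\<in>set_mset m. int (card (star_colorings k i (m - {#d#}))))"
    using card_star_colorings_Suc by (metis of_nat_add of_nat_sum)
  then show "star_chrom (Suc k) i m = sf_mult (p_ab 1 0) (star_chrom k i) m - star_chrom k (Suc i) m"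
    unfolding sf_mult_p_1_0 star_chrom_def by simp
qed

theorem lemma6p4:
  fixes k :: nat
  shows "chrom_sym (star_V k) (star_E k) =
    (\<lambda>m. \<Sum>i = 0..k. (-1) ^ i * int (k choose i) *
           sf_mult (sf_pow (p_ab 1 0) (k - i)) (p_ab (i + 1) 0) m)"
  using binomial_solution_of_recurrence[where L = "sf_mult (p_ab 1 0)" and y = star_chrom
      and b = "\<lambda>i. p_ab (i + 1) 0", OF sf_mult_sum_right star_chrom_0 star_chrom_Suc]
  by (simp add: chrom_sym_star sf_mult_sf_pow atLeast0AtMost)

end
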